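(* Let $p=(p_1,\dots,p_n)$ be pairwise distinct points of $Q$ with $M_{W_i}>0$ for all $i$, and let $p'=(p_1',\dots,p_n')$ be obtained from one step of the higher order Lloyd algorithm, i.e. $p_i'=C_{W_i}$ for each $i$, where $W_i$, $C_{W_i}$ are computed from the order-2 Voronoi partition generated by $p$. Then $\mathcal H(p')\le\mathcal H(p)$, and the inequality is strict unless $p_i=C_{W_i}$ for every $i$.
   Context: $Q\subset\mathbb{R}^2$ is a compact convex polygon, $\phi:Q\to[0,\infty)$ a $C^2$ density, $n\ge3$, $C=\{(a,b):1\le a<b\le n\}$, and $\mathcal H(p_1,\dots,p_n)=\int_Q\min_{(a,b)\in C}\tfrac12(\|q-p_a\|^2+\|q-p_b\|^2)\phi(q)dq$. For $i\ne j$, $V_{\mathcal T_{ij}}=\{q\in Q:\|q-p_v\|\le\|q-p_w\|\ \forall v\in\{i,j\},\ w\notin\{i,j\}\}$ is the order-2 Voronoi cell generated by $\{p_i,p_j\}$; $\mathcal P_i$ is the set of generating pairs containing $i$; $M_V=\int_V\phi$, $C_V=\frac1{M_V}\int_Vq\phi(q)dq$; $W_i=\bigcup_{\mathcal T_{ij}\in\mathcal P_i}V_{\mathcal T_{ij}}$, $M_{W_i}=\sum_{\mathcal T_{ij}\in\mathcal P_i}M_{V_{\mathcal T_{ij}}}$, $C_{W_i}=\frac1{M_{W_i}}\sum_{\mathcal T_{ij}\in\mathcal P_i}M_{V_{\mathcal T_{ij}}}C_{V_{\mathcal T_{ij}}}$. *)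

theory Defs
  imports "HOL-Analysis.Analysis"
begin

type_synonym pt = "real^2"

definition convex_polygon :: "pt set \<Rightarrow> bool" where
  "convex_polygon Q \<longleftrightarrow> (\<exists>S. finite S \<and> Q = convex hull S) \<and> interior Q \<noteq> {}"

definition C2_on :: "pt set \<Rightarrow> (pt \<Rightarrow> real) \<Rightarrow> bool" where
  "C2_on Q f \<longleftrightarrow> (\<exists>U D1 D2. open U \<and> Q \<subseteq> U \<and>
      (\<forall>x\<in>U. (f has_derivative blinfun_apply (D1 x)) (at x)) \<and>
      (\<forall>x\<in>U. (D1 has_derivative blinfun_apply (D2 x)) (at x)) \<and>
      continuous_on U D2)"

text \<open>Points are indexed by 1..n via p :: nat => pt.\<close>

definition pairs :: "nat \<Rightarrow> (nat \<times> nat) set" where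
  "pairs n = {(a,b). 1 \<le> a \<and> a < b \<and> b \<le> n}"

definition H :: "pt set \<Rightarrow> (pt \<Rightarrow> real) \<Rightarrow> nat \<Rightarrow> (nat \<Rightarrow> pt) \<Rightarrow> real" where
  "H Q \<phi> n p = integral Q (\<lambda>q.
      Min ((\<lambda>(a,b). (norm (q - p a))\<^sup>2 / 2 + (norm (q - p b))\<^sup>2 / 2) ` pairs n) * \<phi> q)"

definition VT :: "pt set \<Rightarrow> nat \<Rightarrow> (nat \<Rightarrow> pt) \<Rightarrow> nat \<Rightarrow> nat \<Rightarrow> pt set" where
  "VT Q n p i j = {q \<in> Q. \<forall>v\<in>{i,j}. \<forall>w\<in>{1..n} - {i,j}. norm (q - p v) \<le> norm (q - p w)}"

text \<open>Generating pairs containing i, represented by the partner index j.\<close>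
definition Pset :: "pt set \<Rightarrow> nat \<Rightarrow> (nat \<Rightarrow> pt) \<Rightarrow> nat \<Rightarrow> nat set" where
  "Pset Q n p i = {j \<in> {1..n}. j \<noteq> i \<and> VT Q n p i j \<noteq> {}}"

definition mass :: "(pt \<Rightarrow> real) \<Rightarrow> pt set \<Rightarrow> real" where
  "mass \<phi> V = integral V \<phi>"

definition centroid :: "(pt \<Rightarrow> real) \<Rightarrow> pt set \<Rightarrow> pt" where
  "centroid \<phi> V = (1 / mass \<phi> V) *\<^sub>R integral V (\<lambda>q. \<phi> q *\<^sub>R q)"

definition W :: "pt set \<Rightarrow> nat \<Rightarrow> (nat \<Rightarrow> pt) \<Rightarrow> nat \<Rightarrow> pt set" where
  "W Q n p i = (\<Union>j\<in>Pset Q n p i. VT Q n p i j)"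

definition MW :: "pt set \<Rightarrow> (pt \<Rightarrow> real) \<Rightarrow> nat \<Rightarrow> (nat \<Rightarrow> pt) \<Rightarrow> nat \<Rightarrow> real" where
  "MW Q \<phi> n p i = (\<Sum>j\<in>Pset Q n p i. mass \<phi> (VT Q n p i j))"

definition CW :: "pt set \<Rightarrow> (pt \<Rightarrow> real) \<Rightarrow> nat \<Rightarrow> (nat \<Rightarrow> pt) \<Rightarrow> nat \<Rightarrow> pt" where
  "CW Q \<phi> n p i = (1 / MW Q \<phi> n p i) *\<^sub>R
      (\<Sum>j\<in>Pset Q n p i. mass \<phi> (VT Q n p i j) *\<^sub>R centroid \<phi> (VT Q n p i j))"

end

theory Submission
  imports Defs
begin

text \<open>Freeze the order-2 Voronoi partition of \<open>p\<close> and let the sites \<open>x i\<close> vary: serving each cell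
  \<open>V\<^sub>i\<^sub>j\<close> by \<open>x i\<close> and \<open>x j\<close> costs \<open>\<Sum>\<^sub>i \<Sum>\<^sub>j\<^sub>\<noteq>\<^sub>i \<integral>\<^sub>V\<^sub>i\<^sub>j |q - x i|\<^sup>2 \<phi> / 2\<close>. For \<open>x = p\<close> this is
  \<open>\<H>(p)\<close>, because off the finitely many bisector lines of distinct generators every point lies in
  exactly one cell and its two nearest generators realise the minimum in \<open>\<H>\<close>; for every other \<open>x\<close>
  it dominates \<open>\<H>(x)\<close>, since on \<open>V\<^sub>a\<^sub>b\<close> the integrand of \<open>\<H>(x)\<close> is at most the pair cost of \<open>(a, b)\<close>.
  By the parallel-axis theorem, moving \<open>x i\<close> from \<open>p i\<close> to the centroid \<open>C\<^sub>W\<^sub>i\<close> of \<open>W\<^sub>i\<close> lowers the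
  cost by exactly \<open>M\<^sub>W\<^sub>i |C\<^sub>W\<^sub>i - p i|\<^sup>2 / 2\<close>.\<close>

lemma integrable_continuous_compact:
  fixes f :: "'a::euclidean_space \<Rightarrow> 'b::euclidean_space"
  assumes "compact S" "continuous_on S f"
  shows "f integrable_on S"
proof -
  have "(\<lambda>x. indicator S x *\<^sub>R f x) integrable_on UNIV"
    using integrable_on_lborel[OF borel_integrable_compact[OF assms]] .
  moreover have "(\<lambda>x. indicator S x *\<^sub>R f x) = (\<lambda>x. if x \<in> S then f x else 0)"
    by (auto simp: indicator_def)
  ultimately show ?thesis
    using integrable_restrict_Int[of S f UNIV] by simp
qed

lemma negligible_equidistant:
  fixes a b :: "'a::euclidean_space"
  assumes "a \<noteq> b"
  shows "negligible {q. norm (q - a) = norm (q - b)}"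
proof -
  have "{q. norm (q - a) = norm (q - b)} \<subseteq> {q. (2 *\<^sub>R (b - a)) \<bullet> q = b \<bullet> b - a \<bullet> a}"
  proof
    fix q assume "q \<in> {q. norm (q - a) = norm (q - b)}"
    then have "(q - a) \<bullet> (q - a) = (q - b) \<bullet> (q - b)"
      by (simp add: power2_norm_eq_inner[symmetric])
    then show "q \<in> {q. (2 *\<^sub>R (b - a)) \<bullet> q = b \<bullet> b - a \<bullet> a}"
      by (simp add: inner_diff_left inner_diff_right inner_commute algebra_simps)
  qed
  moreover have "negligible {q. (2 *\<^sub>R (b - a)) \<bullet> q = b \<bullet> b - a \<bullet> a}"
    using assms by (intro negligible_hyperplane) auto
  ultimately show ?thesis
    using negligible_subset by blast
qed

lemma norm_diff_square_shift:
  fixes q y c :: "'a::real_inner"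
  shows "(norm (q - y))\<^sup>2 = (norm (q - c))\<^sup>2 + 2 * ((q - c) \<bullet> (c - y)) + (norm (c - y))\<^sup>2"
  using dot_norm[of "q - c" "c - y"] by simp

lemma integral_sq_dist_shift:
  fixes V :: "'a::euclidean_space set" and y c :: 'a
  assumes V: "compact V" and \<phi>: "continuous_on V \<phi>"
  shows "integral V (\<lambda>q. (norm (q - y))\<^sup>2 * \<phi> q) =
     integral V (\<lambda>q. (norm (q - c))\<^sup>2 * \<phi> q)
     + 2 * ((integral V (\<lambda>q. \<phi> q *\<^sub>R q) - integral V \<phi> *\<^sub>R c) \<bullet> (c - y))
     + integral V \<phi> * (norm (c - y))\<^sup>2"
proof -
  have int: "f integrable_on V" if "continuous_on V f" for f :: "'a \<Rightarrow> 'b::euclidean_space"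
    using integrable_continuous_compact[OF V that] .
  have i1: "(\<lambda>q. (norm (q - c))\<^sup>2 * \<phi> q) integrable_on V"
    and i2: "(\<lambda>q. \<phi> q *\<^sub>R q) integrable_on V"
    and i3: "(\<lambda>q. \<phi> q *\<^sub>R c) integrable_on V"
    and i4: "(\<lambda>q. (\<phi> q *\<^sub>R q - \<phi> q *\<^sub>R c) \<bullet> (c - y)) integrable_on V"
    and i5: "(\<lambda>q. (norm (c - y))\<^sup>2 * \<phi> q) integrable_on V"
    by (intro int continuous_intros \<phi>)+
  have "(norm (q - y))\<^sup>2 * \<phi> q =
      (norm (q - c))\<^sup>2 * \<phi> q + 2 * ((\<phi> q *\<^sub>R q - \<phi> q *\<^sub>R c) \<bullet> (c - y)) + (norm (c - y))\<^sup>2 * \<phi> q" for q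
    unfolding norm_diff_square_shift[of q y c] by (simp add: algebra_simps)
  then have "integral V (\<lambda>q. (norm (q - y))\<^sup>2 * \<phi> q) = integral V (\<lambda>q.
       (norm (q - c))\<^sup>2 * \<phi> q + 2 * ((\<phi> q *\<^sub>R q - \<phi> q *\<^sub>R c) \<bullet> (c - y)) + (norm (c - y))\<^sup>2 * \<phi> q)"
    by presburger
  also have "\<dots> = integral V (\<lambda>q. (norm (q - c))\<^sup>2 * \<phi> q)
       + 2 * integral V (\<lambda>q. (\<phi> q *\<^sub>R q - \<phi> q *\<^sub>R c) \<bullet> (c - y))
       + integral V (\<lambda>q. (norm (c - y))\<^sup>2 * \<phi> q)"
    using i1 i4 i5 by (simp add: integral_add integrable_add)
  also have "integral V (\<lambda>q. (\<phi> q *\<^sub>R q - \<phi> q *\<^sub>R c) \<bullet> (c - y))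
      = (integral V (\<lambda>q. \<phi> q *\<^sub>R q) - integral V \<phi> *\<^sub>R c) \<bullet> (c - y)"
  proof -
    have "integral V (\<lambda>q. \<phi> q *\<^sub>R c) = integral V \<phi> *\<^sub>R c"
      using has_integral_scaleR_left[OF integrable_integral[OF int[OF \<phi>]]] by (rule integral_unique)
    then show ?thesis
      using i2 i3 by (simp add: integral_inner_left integrable_diff integral_diff)
  qed
  finally show ?thesis
    by (simp add: mult.commute)
qed

lemma mass_scaleR_centroid:
  assumes V: "compact V" and \<phi>: "continuous_on V \<phi>" and nonneg: "\<And>q. q \<in> V \<Longrightarrow> 0 \<le> \<phi> q"
  shows "mass \<phi> V *\<^sub>R centroid \<phi> V = integral V (\<lambda>q. \<phi> q *\<^sub>R q)"
proof (cases "mass \<phi> V = 0")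
  case False
  then show ?thesis by (simp add: centroid_def)
next
  case True
  text \<open>A null mass forces a null first moment, which matches the junk value \<open>1 / 0 = 0\<close> in \<open>centroid\<close>.\<close>
  obtain R where R: "\<And>q. q \<in> V \<Longrightarrow> norm q \<le> R"
    using compact_imp_bounded[OF V] bounded_iff by blast
  have "norm (integral V (\<lambda>q. \<phi> q *\<^sub>R q)) \<le> integral V (\<lambda>q. R * \<phi> q)"
  proof (rule integral_norm_bound_integral)
    fix q assume "q \<in> V"
    then show "norm (\<phi> q *\<^sub>R q) \<le> R * \<phi> q"
      using R nonneg by (simp add: mult.commute mult_right_mono)
  qed (intro integrable_continuous_compact V \<phi> continuous_intros)+
  also have "\<dots> = 0"
    using True by (simp add: mass_def)
  finally show ?thesis
    using True by simp
qed

lemma sum_offdiag_ge_pair: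
  fixes T :: "'i \<Rightarrow> 'i \<Rightarrow> real"
  assumes "finite S" "a \<in> S" "b \<in> S" "a \<noteq> b" "\<And>i j. 0 \<le> T i j"
  shows "T a b + T b a \<le> (\<Sum>i\<in>S. \<Sum>j\<in>S - {i}. T i j)"
proof -
  have "T a b + T b a = (\<Sum>(i, j)\<in>{(a, b), (b, a)}. T i j)"
    using assms(4) by simp
  also have "\<dots> \<le> (\<Sum>(i, j)\<in>Sigma S (\<lambda>i. S - {i}). T i j)"
    using assms by (intro sum_mono2) (auto simp: case_prod_beta)
  also have "\<dots> = (\<Sum>i\<in>S. \<Sum>j\<in>S - {i}. T i j)"
    using assms(1) by (simp add: sum.Sigma)
  finally show ?thesis .
qed

lemma sum_offdiag_eq_pair:
  fixes T :: "'i \<Rightarrow> 'i \<Rightarrow> 'a::comm_monoid_add"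
  assumes "finite S" "a \<in> S" "b \<in> S" "a \<noteq> b"
    and "\<And>i j. i \<in> S \<Longrightarrow> j \<in> S - {i} \<Longrightarrow> T i j \<noteq> 0 \<Longrightarrow> (i = a \<and> j = b) \<or> (i = b \<and> j = a)"
  shows "(\<Sum>i\<in>S. \<Sum>j\<in>S - {i}. T i j) = T a b + T b a"
proof -
  have "(\<Sum>i\<in>S. \<Sum>j\<in>S - {i}. T i j) = (\<Sum>(i, j)\<in>Sigma S (\<lambda>i. S - {i}). T i j)"
    using assms(1) by (simp add: sum.Sigma)
  also have "\<dots> = (\<Sum>(i, j)\<in>{(a, b), (b, a)}. T i j)"
    using assms by (intro sum.mono_neutral_right) auto
  also have "\<dots> = T a b + T b a"
    using assms(4) by simp
  finally show ?thesis .
qed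

lemma finite_pairs: "finite (pairs n)"
proof -
  have "pairs n \<subseteq> {1..n} \<times> {1..n}" by (auto simp: pairs_def)
  then show ?thesis using finite_subset by blast
qed

lemma pair_sum_in_pair_image:
  fixes e :: "nat \<Rightarrow> 'a::ab_semigroup_add"
  assumes "a \<in> {1..n}" "b \<in> {1..n}" "a \<noteq> b"
  shows "e a + e b \<in> (\<lambda>(c, d). e c + e d) ` pairs n"
proof -
  have "(min a b, max a b) \<in> pairs n"
    using assms by (auto simp: pairs_def)
  moreover have "e a + e b = (\<lambda>(c, d). e c + e d) (min a b, max a b)"
    by (cases "a \<le> b") (auto simp: min_def max_def add.commute)
  ultimately show ?thesis by blast
qed

lemma Min_pair_sum_le:
  fixes e :: "nat \<Rightarrow> real"
  assumes "a \<in> {1..n}" "b \<in> {1..n}" "a \<noteq> b"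
  shows "Min ((\<lambda>(c, d). e c + e d) ` pairs n) \<le> e a + e b"
  using finite_pairs pair_sum_in_pair_image[OF assms] by (intro Min_le) auto

lemma two_smallest_le_pair_sum:
  fixes e :: "'i \<Rightarrow> real"
  assumes "a \<noteq> b" "c \<noteq> d" "c \<in> S" "d \<in> S"
    and two_smallest: "\<And>w. w \<in> S - {a, b} \<Longrightarrow> e a \<le> e w \<and> e b \<le> e w"
  shows "e a + e b \<le> e c + e d"
  using two_smallest[of c] two_smallest[of d] assms(1-4)
  by (cases "c = a"; cases "c = b"; cases "d = a"; cases "d = b") auto

lemma Min_pair_sum_eq:
  fixes e :: "nat \<Rightarrow> real"
  assumes "a \<in> {1..n}" "b \<in> {1..n}" "a \<noteq> b"
    and "\<And>w. w \<in> {1..n} - {a, b} \<Longrightarrow> e a \<le> e w \<and> e b \<le> e w"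
  shows "Min ((\<lambda>(c, d). e c + e d) ` pairs n) = e a + e b"
proof (rule Min_eqI)
  fix y assume "y \<in> (\<lambda>(c, d). e c + e d) ` pairs n"
  then obtain c d where "(c, d) \<in> pairs n" "y = e c + e d" by auto
  then show "e a + e b \<le> y"
    using two_smallest_le_pair_sum[of a b c d "{1..n}" e] assms by (auto simp: pairs_def)
qed (use finite_pairs pair_sum_in_pair_image[OF assms(1-3)] in auto)

lemma obtain_two_smallest:
  fixes e :: "'i \<Rightarrow> 'a::linorder"
  assumes "finite S" "2 \<le> card S"
  obtains a b where "a \<in> S" "b \<in> S" "a \<noteq> b" "\<And>w. w \<in> S - {a, b} \<Longrightarrow> e a \<le> e w \<and> e b \<le> e w"
proof -
  define a where "a = arg_min_on e S"
  define b where "b = arg_min_on e (S - {a})"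
  have "S \<noteq> {}" using assms by auto
  then have a: "a \<in> S" "\<And>w. w \<in> S \<Longrightarrow> e a \<le> e w"
    using arg_min_if_finite[OF assms(1), of e] unfolding a_def by (auto simp: not_less)
  have "card (S - {a}) \<noteq> 0"
    using assms a by simp
  then have "S - {a} \<noteq> {}" by (metis card.empty)
  then have b: "b \<in> S - {a}" "\<And>w. w \<in> S - {a} \<Longrightarrow> e b \<le> e w"
    using arg_min_if_finite[of "S - {a}" e] assms(1) unfolding b_def by (auto simp: not_less)
  show ?thesis
    using that a b by blast
qed

lemma C2_on_imp_continuous_on:
  assumes "C2_on Q f"
  shows "continuous_on Q f"
proof -
  obtain U D1 where "Q \<subseteq> U" "\<forall>x\<in>U. (f has_derivative blinfun_apply (D1 x)) (at x)"
    using assms unfolding C2_on_def by blast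
  then show ?thesis
    by (meson has_derivative_continuous continuous_at_imp_continuous_on subsetD)
qed

locale order2_voronoi =
  fixes Q :: "pt set" and \<phi> :: "pt \<Rightarrow> real" and n :: nat and p :: "nat \<Rightarrow> pt"
  assumes compact_Q: "compact Q"
    and continuous_on_\<phi>: "continuous_on Q \<phi>"
    and \<phi>_nonneg: "\<And>q. q \<in> Q \<Longrightarrow> 0 \<le> \<phi> q"
    and two_le_n: "2 \<le> n"
    and inj_p: "inj_on p {1..n}"
begin

abbreviation cell :: "nat \<Rightarrow> nat \<Rightarrow> pt set" where
  "cell i j \<equiv> VT Q n p i j"

lemma cell_subset: "cell i j \<subseteq> Q"
  by (auto simp: VT_def)

lemma cell_commute: "cell i j = cell j i"
  by (simp add: VT_def insert_commute)

lemma compact_cell: "compact (cell i j)"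
proof -
  have "cell i j = Q \<inter> (\<Inter>v\<in>{i, j}. \<Inter>w\<in>{1..n} - {i, j}. {q. norm (q - p v) \<le> norm (q - p w)})"
    by (auto simp: VT_def)
  moreover have "closed (\<Inter>v\<in>{i, j}. \<Inter>w\<in>{1..n} - {i, j}. {q. norm (q - p v) \<le> norm (q - p w)})"
    by (intro closed_INT ballI closed_Collect_le continuous_intros)
  ultimately show ?thesis
    using compact_Q by (simp add: compact_Int_closed)
qed

lemma continuous_on_cell: "continuous_on (cell i j) \<phi>"
  using continuous_on_subset[OF continuous_on_\<phi> cell_subset] .

lemma cell_nearest:
  assumes "q \<in> cell a b" "w \<in> {1..n} - {a, b}"
  shows "norm (q - p a) \<le> norm (q - p w)" "norm (q - p b) \<le> norm (q - p w)"
  using assms by (auto simp: VT_def)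

lemma obtain_cell:
  assumes "q \<in> Q"
  obtains a b where "a \<in> {1..n}" "b \<in> {1..n}" "a \<noteq> b" "q \<in> cell a b"
proof -
  obtain a b where "a \<in> {1..n}" "b \<in> {1..n}" "a \<noteq> b"
      "\<And>w. w \<in> {1..n} - {a, b} \<Longrightarrow> norm (q - p a) \<le> norm (q - p w) \<and> norm (q - p b) \<le> norm (q - p w)"
    using obtain_two_smallest[of "{1..n}" "\<lambda>w. norm (q - p w)"] two_le_n by auto
  with assms that show ?thesis
    by (auto simp: VT_def)
qed

definition ties :: "pt set" where
  "ties = (\<Union>v\<in>{1..n}. \<Union>w\<in>{1..n} - {v}. {q. norm (q - p v) = norm (q - p w)})"

lemma negligible_ties: "negligible ties"
proof -
  have "negligible (\<Union>w\<in>{1..n} - {v}. {q. norm (q - p v) = norm (q - p w)})" if "v \<in> {1..n}" for v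
    using that inj_p
    by (intro negligible_Union finite_imageI finite_Diff finite_atLeastAtMost)
      (auto intro!: negligible_equidistant dest: inj_onD)
  then show ?thesis
    unfolding ties_def by (intro negligible_Union finite_imageI finite_atLeastAtMost) auto
qed

lemma cell_unique_off_ties:
  assumes "q \<notin> ties" "q \<in> cell a b" "q \<in> cell i j"
    and "a \<in> {1..n}" "b \<in> {1..n}" "a \<noteq> b" "i \<in> {1..n}" "j \<in> {1..n}" "i \<noteq> j"
  shows "(i = a \<and> j = b) \<or> (i = b \<and> j = a)"
proof (rule ccontr)
  assume "\<not> ?thesis"
  then obtain v w where vw: "v \<in> {i, j}" "v \<notin> {a, b}" "w \<in> {a, b}" "w \<notin> {i, j}"
    using assms(6,9) by blast
  have S: "v \<in> {1..n}" "w \<in> {1..n}" "v \<noteq> w"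
    using vw assms(4,5,7,8) by auto
  have "norm (q - p v) \<le> norm (q - p w)"
    using assms(3) vw S unfolding VT_def by blast
  moreover have "norm (q - p w) \<le> norm (q - p v)"
    using assms(2) vw S unfolding VT_def by blast
  ultimately have "q \<in> ties"
    using S unfolding ties_def by force
  then show False
    using assms(1) by blast
qed

lemma Min_pair_cost_on_cell:
  assumes "q \<in> cell a b" "a \<in> {1..n}" "b \<in> {1..n}" "a \<noteq> b"
  shows "Min ((\<lambda>(c, d). (norm (q - p c))\<^sup>2 / 2 + (norm (q - p d))\<^sup>2 / 2) ` pairs n)
    = (norm (q - p a))\<^sup>2 / 2 + (norm (q - p b))\<^sup>2 / 2"
  using assms(2-4) cell_nearest[OF assms(1)]
  by (intro Min_pair_sum_eq[where e = "\<lambda>w. (norm (q - p w))\<^sup>2 / 2"]) (auto intro: power_mono)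

text \<open>The cell \<open>V\<^sub>i\<^sub>j = V\<^sub>j\<^sub>i\<close> is served by \<open>x i\<close> and \<open>x j\<close>: the ordered pairs \<open>(i, j)\<close> and \<open>(j, i)\<close>
  carry the two halves of its pair cost.\<close>

definition partition_cost :: "(nat \<Rightarrow> pt) \<Rightarrow> real" where
  "partition_cost x =
    (\<Sum>i\<in>{1..n}. \<Sum>j\<in>{1..n} - {i}. integral (cell i j) (\<lambda>q. (norm (q - x i))\<^sup>2 * \<phi> q)) / 2"

definition cell_sq_dist :: "(nat \<Rightarrow> pt) \<Rightarrow> pt \<Rightarrow> nat \<Rightarrow> nat \<Rightarrow> real" where
  "cell_sq_dist x q i j = (if q \<in> cell i j then (norm (q - x i))\<^sup>2 * \<phi> q else 0)"

lemma cell_sq_dist_nonneg: "q \<in> Q \<Longrightarrow> 0 \<le> cell_sq_dist x q i j"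
  by (simp add: cell_sq_dist_def \<phi>_nonneg)

lemma has_integral_partition_cost:
  "((\<lambda>q. (\<Sum>i\<in>{1..n}. \<Sum>j\<in>{1..n} - {i}. cell_sq_dist x q i j) / 2) has_integral partition_cost x) Q"
  unfolding partition_cost_def
proof (intro has_integral_divide has_integral_sum finite_atLeastAtMost finite_Diff)
  fix i j
  have "(\<lambda>q. (norm (q - x i))\<^sup>2 * \<phi> q) integrable_on cell i j"
    by (intro integrable_continuous_compact compact_cell continuous_intros continuous_on_cell)
  then have "((\<lambda>q. (norm (q - x i))\<^sup>2 * \<phi> q) has_integral
      integral (cell i j) (\<lambda>q. (norm (q - x i))\<^sup>2 * \<phi> q)) (cell i j \<inter> Q)"
    using cell_subset[of i j] by (simp add: Int_absorb2 integrable_integral)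
  then show "((\<lambda>q. cell_sq_dist x q i j) has_integral
      integral (cell i j) (\<lambda>q. (norm (q - x i))\<^sup>2 * \<phi> q)) Q"
    unfolding cell_sq_dist_def by (simp only: has_integral_restrict_Int)
qed

lemma H_eq_partition_cost: "H Q \<phi> n p = partition_cost p"
proof -
  have "H Q \<phi> n p = integral Q (\<lambda>q. (\<Sum>i\<in>{1..n}. \<Sum>j\<in>{1..n} - {i}. cell_sq_dist p q i j) / 2)"
    unfolding H_def
  proof (rule integral_spike[OF negligible_ties])
    fix q assume q: "q \<in> Q - ties"
    then obtain a b where ab: "a \<in> {1..n}" "b \<in> {1..n}" "a \<noteq> b" "q \<in> cell a b"
      by (auto elim: obtain_cell)
    have "(\<Sum>i\<in>{1..n}. \<Sum>j\<in>{1..n} - {i}. cell_sq_dist p q i j) = cell_sq_dist p q a b + cell_sq_dist p q b a"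
      using q ab cell_unique_off_ties[of q a b]
      by (intro sum_offdiag_eq_pair) (auto simp: cell_sq_dist_def split: if_splits)
    also have "\<dots> = ((norm (q - p a))\<^sup>2 / 2 + (norm (q - p b))\<^sup>2 / 2) * \<phi> q * 2"
      using ab(4) cell_commute[of a b] by (simp add: cell_sq_dist_def algebra_simps)
    finally show "(\<Sum>i\<in>{1..n}. \<Sum>j\<in>{1..n} - {i}. cell_sq_dist p q i j) / 2 =
        Min ((\<lambda>(a, b). (norm (q - p a))\<^sup>2 / 2 + (norm (q - p b))\<^sup>2 / 2) ` pairs n) * \<phi> q"
      using Min_pair_cost_on_cell[OF ab(4,1-3)] by simp
  qed
  also have "\<dots> = partition_cost p"
    using has_integral_partition_cost by (rule integral_unique)
  finally show ?thesis .
qed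

lemma H_le_partition_cost: "H Q \<phi> n x \<le> partition_cost x"
proof (cases "(\<lambda>q. Min ((\<lambda>(a, b). (norm (q - x a))\<^sup>2 / 2 + (norm (q - x b))\<^sup>2 / 2) ` pairs n) * \<phi> q)
    integrable_on Q")
  case True
  show ?thesis
    unfolding H_def
  proof (rule has_integral_le[OF integrable_integral[OF True] has_integral_partition_cost])
    fix q assume q: "q \<in> Q"
    then obtain a b where ab: "a \<in> {1..n}" "b \<in> {1..n}" "a \<noteq> b" "q \<in> cell a b"
      by (auto elim: obtain_cell)
    have "Min ((\<lambda>(a, b). (norm (q - x a))\<^sup>2 / 2 + (norm (q - x b))\<^sup>2 / 2) ` pairs n) * \<phi> q
        \<le> ((norm (q - x a))\<^sup>2 / 2 + (norm (q - x b))\<^sup>2 / 2) * \<phi> q"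
      using Min_pair_sum_le[OF ab(1-3)] q by (intro mult_right_mono \<phi>_nonneg)
    also have "\<dots> = (cell_sq_dist x q a b + cell_sq_dist x q b a) / 2"
      using ab(4) cell_commute[of a b] by (simp add: cell_sq_dist_def algebra_simps)
    also have "\<dots> \<le> (\<Sum>i\<in>{1..n}. \<Sum>j\<in>{1..n} - {i}. cell_sq_dist x q i j) / 2"
      using ab q by (intro divide_right_mono sum_offdiag_ge_pair cell_sq_dist_nonneg) auto
    finally show "Min ((\<lambda>(a, b). (norm (q - x a))\<^sup>2 / 2 + (norm (q - x b))\<^sup>2 / 2) ` pairs n) * \<phi> q
        \<le> (\<Sum>i\<in>{1..n}. \<Sum>j\<in>{1..n} - {i}. cell_sq_dist x q i j) / 2" .
  qed
next
  case False
  then have "H Q \<phi> n x = 0"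
    by (simp add: H_def not_integrable_integral)
  also have "0 \<le> partition_cost x"
    using has_integral_partition_cost
    by (rule has_integral_nonneg) (intro divide_nonneg_pos sum_nonneg cell_sq_dist_nonneg, auto)
  finally show ?thesis .
qed

lemma MW_eq_sum_cells: "MW Q \<phi> n p i = (\<Sum>j\<in>{1..n} - {i}. mass \<phi> (cell i j))"
  unfolding MW_def by (rule sum.mono_neutral_left) (auto simp: Pset_def mass_def)

lemma MW_scaleR_CW:
  assumes "MW Q \<phi> n p i \<noteq> 0"
  shows "MW Q \<phi> n p i *\<^sub>R CW Q \<phi> n p i = (\<Sum>j\<in>{1..n} - {i}. integral (cell i j) (\<lambda>q. \<phi> q *\<^sub>R q))"
proof -
  have "MW Q \<phi> n p i *\<^sub>R CW Q \<phi> n p i =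
      (\<Sum>j\<in>Pset Q n p i. mass \<phi> (cell i j) *\<^sub>R centroid \<phi> (cell i j))"
    using assms by (simp add: CW_def)
  also have "\<dots> = (\<Sum>j\<in>{1..n} - {i}. mass \<phi> (cell i j) *\<^sub>R centroid \<phi> (cell i j))"
    by (rule sum.mono_neutral_left) (auto simp: Pset_def mass_def)
  also have "\<dots> = (\<Sum>j\<in>{1..n} - {i}. integral (cell i j) (\<lambda>q. \<phi> q *\<^sub>R q))"
    using cell_subset \<phi>_nonneg
    by (intro sum.cong refl mass_scaleR_centroid compact_cell continuous_on_cell) blast
  finally show ?thesis .
qed

lemma sum_cell_moments_shift:
  assumes "MW Q \<phi> n p i \<noteq> 0"
  shows "(\<Sum>j\<in>{1..n} - {i}. integral (cell i j) (\<lambda>q. (norm (q - y))\<^sup>2 * \<phi> q))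
    = (\<Sum>j\<in>{1..n} - {i}. integral (cell i j) (\<lambda>q. (norm (q - CW Q \<phi> n p i))\<^sup>2 * \<phi> q))
      + MW Q \<phi> n p i * (norm (CW Q \<phi> n p i - y))\<^sup>2"
proof -
  let ?c = "CW Q \<phi> n p i" and ?J = "{1..n} - {i}"
  let ?m = "\<lambda>j. integral (cell i j) \<phi>" and ?I = "\<lambda>j. integral (cell i j) (\<lambda>q. \<phi> q *\<^sub>R q)"
  have "(\<Sum>j\<in>?J. integral (cell i j) (\<lambda>q. (norm (q - y))\<^sup>2 * \<phi> q))
      = (\<Sum>j\<in>?J. integral (cell i j) (\<lambda>q. (norm (q - ?c))\<^sup>2 * \<phi> q)
          + 2 * ((?I j - ?m j *\<^sub>R ?c) \<bullet> (?c - y)) + ?m j * (norm (?c - y))\<^sup>2)"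
    by (intro sum.cong refl integral_sq_dist_shift compact_cell continuous_on_cell)
  also have "\<dots> = (\<Sum>j\<in>?J. integral (cell i j) (\<lambda>q. (norm (q - ?c))\<^sup>2 * \<phi> q))
      + 2 * ((\<Sum>j\<in>?J. ?I j - ?m j *\<^sub>R ?c) \<bullet> (?c - y)) + (\<Sum>j\<in>?J. ?m j) * (norm (?c - y))\<^sup>2"
    by (simp add: sum.distrib inner_sum_left sum_distrib_left sum_distrib_right)
  also have "(\<Sum>j\<in>?J. ?I j - ?m j *\<^sub>R ?c) = 0"
    using MW_scaleR_CW[OF assms] MW_eq_sum_cells[of i]
    by (simp add: sum_subtractf scaleR_sum_left mass_def)
  finally show ?thesis
    by (simp add: MW_eq_sum_cells mass_def)
qed

lemma partition_cost_centroid_step: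
  assumes "\<And>i. i \<in> {1..n} \<Longrightarrow> MW Q \<phi> n p i \<noteq> 0"
  shows "partition_cost p = partition_cost (CW Q \<phi> n p)
    + (\<Sum>i\<in>{1..n}. MW Q \<phi> n p i * (norm (CW Q \<phi> n p i - p i))\<^sup>2) / 2"
proof -
  have "(\<Sum>i\<in>{1..n}. \<Sum>j\<in>{1..n} - {i}. integral (cell i j) (\<lambda>q. (norm (q - p i))\<^sup>2 * \<phi> q))
    = (\<Sum>i\<in>{1..n}. (\<Sum>j\<in>{1..n} - {i}. integral (cell i j) (\<lambda>q. (norm (q - CW Q \<phi> n p i))\<^sup>2 * \<phi> q))
        + MW Q \<phi> n p i * (norm (CW Q \<phi> n p i - p i))\<^sup>2)"
    using assms by (intro sum.cong refl sum_cell_moments_shift) auto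
  then show ?thesis
    unfolding partition_cost_def by (simp add: sum.distrib add_divide_distrib)
qed

end

theorem mainTheorem6:
  fixes Q :: "(real^2) set" and \<phi> :: "real^2 \<Rightarrow> real" and n :: nat and p :: "nat \<Rightarrow> real^2"
  assumes "compact Q" and "convex_polygon Q"
    and "C2_on Q \<phi>" and "\<forall>q\<in>Q. \<phi> q \<ge> 0"
    and "n \<ge> 3"
    and "\<forall>i\<in>{1..n}. p i \<in> Q" and "inj_on p {1..n}"
    and "\<forall>i\<in>{1..n}. MW Q \<phi> n p i > 0"
  shows "H Q \<phi> n (\<lambda>i. CW Q \<phi> n p i) \<le> H Q \<phi> n p
    \<and> ((\<exists>i\<in>{1..n}. p i \<noteq> CW Q \<phi> n p i) \<longrightarrow> H Q \<phi> n (\<lambda>i. CW Q \<phi> n p i) < H Q \<phi> n p)"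
proof -
  interpret order2_voronoi Q \<phi> n p
    using assms C2_on_imp_continuous_on by unfold_locales auto
  let ?gain = "(\<Sum>i\<in>{1..n}. MW Q \<phi> n p i * (norm (CW Q \<phi> n p i - p i))\<^sup>2) / 2"
  have "partition_cost p = partition_cost (CW Q \<phi> n p) + ?gain"
    by (intro partition_cost_centroid_step) (metis assms(8) order_less_irrefl)
  then have descent: "H Q \<phi> n (CW Q \<phi> n p) + ?gain \<le> H Q \<phi> n p"
    using H_le_partition_cost[of "CW Q \<phi> n p"] H_eq_partition_cost by linarith
  have gain_nonneg: "0 \<le> ?gain"
    using assms(8) by (intro divide_nonneg_pos sum_nonneg) (auto simp: less_imp_le)
  have gain_pos: "0 < ?gain" if "\<exists>i\<in>{1..n}. p i \<noteq> CW Q \<phi> n p i"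
  proof -
    from that obtain i where "i \<in> {1..n}" "p i \<noteq> CW Q \<phi> n p i" by blast
    then show ?thesis
      using assms(8) by (intro divide_pos_pos sum_pos2[of _ i]) (auto simp: less_imp_le)
  qed
  show ?thesis
  proof (intro conjI impI)
    show "H Q \<phi> n (\<lambda>i. CW Q \<phi> n p i) \<le> H Q \<phi> n p"
      using descent gain_nonneg by linarith
  next
    assume "\<exists>i\<in>{1..n}. p i \<noteq> CW Q \<phi> n p i"
    show "H Q \<phi> n (\<lambda>i. CW Q \<phi> n p i) < H Q \<phi> n p"
      using descent gain_pos[OF \<open>\<exists>i\<in>{1..n}. p i \<noteq> CW Q \<phi> n p i\<close>] by linarith
  qed
qed

end
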